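(* For all integers $m,n\geq 1$, \[p^{ed}_{od}(m,n)-p^{ed}_{od}(m,n-1)=D_e(m,n-1)+D_e(m-1,n-1)-D_o(m,n-1).\]
   Context: $\mathcal{P}^{ed}_{od}$ is the set of integer partitions such that: - all parts are distinct; - every odd part is smaller than every even part; - at least one odd part appears. For integers $m,n\ge 0$: - $p^{ed}_{od}(m,n)$ is the number of partitions of $n$ in $\mathcal{P}^{ed}_{od}$ with exactly $m$ parts; in particular $p^{ed}_{od}(m,0)=0$. - $D_o(m,n)$ is the number of partitions of $n$ into exactly $m$ distinct odd parts. - $D_e(m,n)$ is the number of partitions of $n$ into exactly $m$ distinct even parts. - By convention $D_e(0,n)=D_o(0,n)$ equals $1$ if $n=0$ and $0$ otherwise. *)

theory Defs
  imports Main
begin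

text \<open>A partition into distinct parts is represented by the finite set of its parts
  (all positive). Its size is the sum of the set, the number of parts is its cardinality.\<close>

definition distinct_partitions :: "nat \<Rightarrow> nat \<Rightarrow> nat set set" where
  "distinct_partitions m n = {S. finite S \<and> 0 \<notin> S \<and> \<Sum>S = n \<and> card S = m}"

definition p_ed_od :: "nat \<Rightarrow> nat \<Rightarrow> nat" where
  "p_ed_od m n = card {S \<in> distinct_partitions m n.
      (\<forall>a\<in>S. \<forall>b\<in>S. odd a \<and> even b \<longrightarrow> a < b) \<and> (\<exists>a\<in>S. odd a)}"

definition D_o :: "nat \<Rightarrow> nat \<Rightarrow> nat" where
  "D_o m n = card {S \<in> distinct_partitions m n. \<forall>a\<in>S. odd a}"

definition D_e :: "nat \<Rightarrow> nat \<Rightarrow> nat" where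
  "D_e m n = card {S \<in> distinct_partitions m n. \<forall>a\<in>S. even a}"

end

theory Submission
  imports Defs
begin

text \<open>Call a set of parts separated if every odd part is below every even part.
  A separated partition of \<open>n\<close> whose odd parts are just \<open>{1}\<close> is an even partition of
  \<open>n - 1\<close> with the part 1 added. If it has a larger odd part, lowering its largest odd part
  by one yields a separated partition of \<open>n - 1\<close> with an even part, and raising the smallest
  even part by one undoes this. Separated partitions of \<open>n - 1\<close> with an even part are the
  mixed ones plus the all-even ones, while those counted by \<open>p_ed_od m (n - 1)\<close> are the mixed
  ones plus the all-odd ones; subtracting, the mixed ones cancel.\<close>

definition separated :: "nat set \<Rightarrow> bool" where
  "separated S \<longleftrightarrow> (\<forall>a\<in>S. \<forall>b\<in>S. odd a \<and> even b \<longrightarrow> a < b)"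

definition separated_partitions :: "nat \<Rightarrow> nat \<Rightarrow> nat set set" where
  "separated_partitions m n = {S \<in> distinct_partitions m n. separated S}"

definition max_odd :: "nat set \<Rightarrow> nat" where
  "max_odd S = Max {x \<in> S. odd x}"

definition min_even :: "nat set \<Rightarrow> nat" where
  "min_even S = Min {x \<in> S. even x}"

lemma finite_distinct_partitions: "finite (distinct_partitions m n)"
proof (rule finite_subset)
  show "distinct_partitions m n \<subseteq> Pow {..n}"
    unfolding distinct_partitions_def by (auto intro: member_le_sum)
qed simp

lemma distinct_partitions_Suc_nonempty:
  assumes "S \<in> distinct_partitions (Suc m) n"
  shows "\<exists>x. x \<in> S"
proof -
  have "S \<noteq> {}" using assms by (auto simp: distinct_partitions_def)
  then show ?thesis by blast
qed

lemma finite_separated_partitions: "finite (separated_partitions m n)"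
  using finite_distinct_partitions by (simp add: separated_partitions_def)

lemma insert_remove_distinct_partitions:
  assumes S: "S \<in> distinct_partitions m n" and "a \<in> S" "b \<notin> S" "b \<noteq> 0"
    and size: "n' + a = n + b"
  shows "insert b (S - {a}) \<in> distinct_partitions m n'"
proof -
  have fin: "finite S" and "0 \<notin> S" "\<Sum>S = n" "card S = m"
    using S by (auto simp: distinct_partitions_def)
  have "\<Sum>(insert b (S - {a})) + a = b + \<Sum>S"
    using fin \<open>a \<in> S\<close> \<open>b \<notin> S\<close> by (simp add: sum.remove)
  then have "\<Sum>(insert b (S - {a})) = n'"
    using size \<open>\<Sum>S = n\<close> by simp
  moreover have "card (insert b (S - {a})) = m"
    using fin \<open>a \<in> S\<close> \<open>b \<notin> S\<close> \<open>card S = m\<close> card_gt_0_iff[of S] by auto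
  ultimately show ?thesis
    using fin \<open>0 \<notin> S\<close> \<open>b \<noteq> 0\<close> by (simp add: distinct_partitions_def)
qed

lemma max_odd_in:
  assumes "finite S" "\<exists>a\<in>S. odd a"
  shows "max_odd S \<in> S" "odd (max_odd S)"
  using Max_in[of "{x \<in> S. odd x}"] assms by (auto simp: max_odd_def)

lemma max_odd_ge: "finite S \<Longrightarrow> x \<in> S \<Longrightarrow> odd x \<Longrightarrow> x \<le> max_odd S"
  unfolding max_odd_def by (rule Max_ge) auto

lemma max_odd_eqI:
  "finite S \<Longrightarrow> a \<in> S \<Longrightarrow> odd a \<Longrightarrow> (\<And>x. x \<in> S \<Longrightarrow> odd x \<Longrightarrow> x \<le> a) \<Longrightarrow> max_odd S = a"
  unfolding max_odd_def by (rule Max_eqI) auto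

lemma min_even_in:
  assumes "finite S" "\<exists>b\<in>S. even b"
  shows "min_even S \<in> S" "even (min_even S)"
  using Min_in[of "{x \<in> S. even x}"] assms by (auto simp: min_even_def)

lemma min_even_le: "finite S \<Longrightarrow> x \<in> S \<Longrightarrow> even x \<Longrightarrow> min_even S \<le> x"
  unfolding min_even_def by (rule Min_le) auto

lemma min_even_eqI:
  "finite S \<Longrightarrow> b \<in> S \<Longrightarrow> even b \<Longrightarrow> (\<And>x. x \<in> S \<Longrightarrow> even x \<Longrightarrow> b \<le> x) \<Longrightarrow> min_even S = b"
  unfolding min_even_def by (rule Min_eqI) auto

lemma separated_lower_max_odd:
  assumes sep: "separated S" and "a \<in> S" "odd a"
    and max: "\<And>x. x \<in> S \<Longrightarrow> odd x \<Longrightarrow> x \<le> a"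
  shows "a - 1 \<notin> S"
    and "separated (insert (a - 1) (S - {a}))"
    and "\<And>y. y \<in> insert (a - 1) (S - {a}) \<Longrightarrow> even y \<Longrightarrow> a - 1 \<le> y"
proof -
  have ev: "even (a - 1)" using \<open>odd a\<close> by simp
  show "a - 1 \<notin> S"
  proof
    assume "a - 1 \<in> S"
    then have "a < a - 1" using sep \<open>a \<in> S\<close> \<open>odd a\<close> ev unfolding separated_def by blast
    then show False by simp
  qed
  show "a - 1 \<le> y" if "y \<in> insert (a - 1) (S - {a})" "even y" for y
  proof (cases "y = a - 1")
    case False
    then have "a < y" using that sep \<open>a \<in> S\<close> \<open>odd a\<close> unfolding separated_def by auto
    then show ?thesis by simp
  qed simp
  show "separated (insert (a - 1) (S - {a}))"
    unfolding separated_def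
  proof (intro ballI impI)
    fix x y assume x: "x \<in> insert (a - 1) (S - {a})" and y: "y \<in> insert (a - 1) (S - {a})"
      and parity: "odd x \<and> even y"
    from parity ev have "x \<noteq> a - 1" by auto
    with x have "x \<in> S" "x \<noteq> a" by auto
    then have "x < a - 1" using max[of x] parity \<open>odd a\<close> by (auto elim!: oddE)
    show "x < y"
    proof (cases "y = a - 1")
      case False
      with y have "y \<in> S" by simp
      with sep \<open>x \<in> S\<close> parity show ?thesis unfolding separated_def by blast
    qed (use \<open>x < a - 1\<close> in simp)
  qed
qed

lemma separated_raise_min_even:
  assumes sep: "separated T" and "b \<in> T" "even b"
    and min: "\<And>y. y \<in> T \<Longrightarrow> even y \<Longrightarrow> b \<le> y"
  shows "b + 1 \<notin> T"
    and "separated (insert (b + 1) (T - {b}))"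
    and "\<And>x. x \<in> insert (b + 1) (T - {b}) \<Longrightarrow> odd x \<Longrightarrow> x \<le> b + 1"
proof -
  have od: "odd (b + 1)" using \<open>even b\<close> by simp
  show "b + 1 \<notin> T"
  proof
    assume "b + 1 \<in> T"
    then have "b + 1 < b" using sep \<open>b \<in> T\<close> \<open>even b\<close> od unfolding separated_def by blast
    then show False by simp
  qed
  show "x \<le> b + 1" if "x \<in> insert (b + 1) (T - {b})" "odd x" for x
  proof (cases "x = b + 1")
    case False
    then have "x < b" using that sep \<open>b \<in> T\<close> \<open>even b\<close> unfolding separated_def by auto
    then show ?thesis by simp
  qed simp
  show "separated (insert (b + 1) (T - {b}))"
    unfolding separated_def
  proof (intro ballI impI)
    fix x y assume x: "x \<in> insert (b + 1) (T - {b})" and y: "y \<in> insert (b + 1) (T - {b})"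
      and parity: "odd x \<and> even y"
    from parity od have "y \<noteq> b + 1" by auto
    with y have "y \<in> T" "y \<noteq> b" by auto
    then have "b + 1 < y" using min[of y] parity \<open>even b\<close> by (auto elim!: evenE)
    show "x < y"
    proof (cases "x = b + 1")
      case False
      with x have "x \<in> T" by simp
      with sep \<open>y \<in> T\<close> parity show ?thesis unfolding separated_def by blast
    qed (use \<open>b + 1 < y\<close> in simp)
  qed
qed

lemma card_separated_odd_part_one:
  "card {S \<in> separated_partitions (Suc m) (Suc n). 1 \<in> S \<and> (\<forall>x\<in>S - {1}. even x)} = D_e m n"
proof -
  let ?A = "{S \<in> separated_partitions (Suc m) (Suc n). 1 \<in> S \<and> (\<forall>x\<in>S - {1}. even x)}"
  let ?B = "{T \<in> distinct_partitions m n. \<forall>x\<in>T. even x}"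
  have "bij_betw (\<lambda>S. S - {1}) ?A ?B"
  proof (rule bij_betw_byWitness[where f' = "insert 1"])
    show "\<forall>S\<in>?A. insert 1 (S - {1}) = S" by (simp add: insert_absorb)
    show "\<forall>T\<in>?B. insert 1 T - {1} = T" by fastforce
    show "(\<lambda>S. S - {1}) ` ?A \<subseteq> ?B"
    proof (rule image_subsetI)
      fix S assume "S \<in> ?A"
      then have even: "\<forall>x\<in>S - {1}. even x" by simp
      from \<open>S \<in> ?A\<close> have "finite S" "0 \<notin> S" "\<Sum>S = Suc n" "card S = Suc m" "1 \<in> S"
        by (auto simp: separated_partitions_def distinct_partitions_def)
      then have "S - {1} \<in> distinct_partitions m n"
        by (simp add: distinct_partitions_def sum.remove)
      with even show "S - {1} \<in> ?B" by simp
    qed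
    show "insert 1 ` ?B \<subseteq> ?A"
    proof (rule image_subsetI)
      fix T assume "T \<in> ?B"
      then have T: "T \<in> distinct_partitions m n" and even: "\<forall>x\<in>T. even x" by auto
      then have "1 \<notin> T" "0 \<notin> T" "finite T" by (auto simp: distinct_partitions_def)
      then have "insert 1 T \<in> distinct_partitions (Suc m) (Suc n)"
        using T by (simp add: distinct_partitions_def)
      moreover have "separated (insert 1 T)"
        unfolding separated_def
      proof (intro ballI impI)
        fix a b assume "a \<in> insert 1 T" "b \<in> insert 1 T" and parity: "odd a \<and> even b"
        with even have "a = 1" "b \<in> T" by auto
        moreover from \<open>b \<in> T\<close> \<open>0 \<notin> T\<close> have "b \<noteq> 0" by metis
        ultimately show "a < b" using parity by presburger
      qed
      ultimately show "insert 1 T \<in> ?A" using even \<open>1 \<notin> T\<close> by (simp add: separated_partitions_def)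
    qed
  qed
  then show ?thesis unfolding D_e_def by (rule bij_betw_same_card)
qed

lemma card_separated_large_odd_part:
  "card {S \<in> separated_partitions m (Suc n). \<exists>a\<in>S. odd a \<and> a \<noteq> 1}
   = card {T \<in> separated_partitions m n. \<exists>b\<in>T. even b}"
proof -
  let ?A = "{S \<in> separated_partitions m (Suc n). \<exists>a\<in>S. odd a \<and> a \<noteq> 1}"
  let ?B = "{T \<in> separated_partitions m n. \<exists>b\<in>T. even b}"
  let ?lower = "\<lambda>S. insert (max_odd S - 1) (S - {max_odd S})"
  let ?raise = "\<lambda>T. insert (min_even T + 1) (T - {min_even T})"
  have lower: "?lower S \<in> ?B \<and> ?raise (?lower S) = S" if "S \<in> ?A" for S
  proof -
    from that obtain x where S: "S \<in> distinct_partitions m (Suc n)" "separated S"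
      and x: "x \<in> S" "odd x" "x \<noteq> 1"
      by (auto simp: separated_partitions_def)
    have fin: "finite S" using S(1) by (simp add: distinct_partitions_def)
    obtain a where a_def: "a = max_odd S" by simp
    have a: "a \<in> S" "odd a" using max_odd_in[OF fin] x by (auto simp: a_def)
    have max: "\<And>y. y \<in> S \<Longrightarrow> odd y \<Longrightarrow> y \<le> a" using max_odd_ge[OF fin] by (simp add: a_def)
    have "a \<ge> 3" using max[OF x(1,2)] x(2,3) by presburger
    note lowered = separated_lower_max_odd[OF S(2) a max]
    let ?T = "insert (a - 1) (S - {a})"
    have T: "?T \<in> distinct_partitions m n"
      by (rule insert_remove_distinct_partitions[OF S(1) a(1) lowered(1)]) (use \<open>a \<ge> 3\<close> in auto)
    have "min_even ?T = a - 1"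
      by (rule min_even_eqI) (use T lowered(3) \<open>odd a\<close> in \<open>auto simp: distinct_partitions_def\<close>)
    moreover have "a - 1 + 1 = a" using \<open>a \<ge> 3\<close> by simp
    ultimately have "?raise ?T = S"
      using a(1) lowered(1) by auto
    moreover have "?T \<in> ?B"
      using T lowered(2) \<open>odd a\<close> by (auto simp: separated_partitions_def)
    ultimately show ?thesis by (simp add: a_def)
  qed
  have raise: "?raise T \<in> ?A \<and> ?lower (?raise T) = T" if "T \<in> ?B" for T
  proof -
    from that have T: "T \<in> distinct_partitions m n" "separated T" "\<exists>b\<in>T. even b"
      by (auto simp: separated_partitions_def)
    have fin: "finite T" "0 \<notin> T" using T(1) by (auto simp: distinct_partitions_def)
    obtain b where b_def: "b = min_even T" by simp
    have b: "b \<in> T" "even b" using min_even_in[OF fin(1) T(3)] by (auto simp: b_def)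
    have min: "\<And>y. y \<in> T \<Longrightarrow> even y \<Longrightarrow> b \<le> y" using min_even_le[OF fin(1)] by (simp add: b_def)
    have "b \<noteq> 0" using b(1) fin(2) by metis
    with \<open>even b\<close> have "b \<ge> 2" by presburger
    note raised = separated_raise_min_even[OF T(2) b min]
    let ?S = "insert (b + 1) (T - {b})"
    have S: "?S \<in> distinct_partitions m (Suc n)"
      by (rule insert_remove_distinct_partitions[OF T(1) b(1) raised(1)]) simp_all
    have "max_odd ?S = b + 1"
      by (rule max_odd_eqI) (use S raised(3) \<open>even b\<close> in \<open>auto simp: distinct_partitions_def\<close>)
    then have "?lower ?S = T"
      using b(1) raised(1) by auto
    moreover have "?S \<in> ?A"
      using S raised(2) \<open>even b\<close> \<open>b \<ge> 2\<close> by (auto simp: separated_partitions_def)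
    ultimately show ?thesis by (simp add: b_def)
  qed
  have "bij_betw ?lower ?A ?B"
    by (rule bij_betw_byWitness[where f' = ?raise]) (use lower raise in blast)+
  then show ?thesis by (rule bij_betw_same_card)
qed

lemma card_filter_split:
  "finite A \<Longrightarrow> card {x \<in> A. P x} = card {x \<in> A. P x \<and> Q x} + card {x \<in> A. P x \<and> \<not> Q x}"
  by (subst card_Un_disjoint[symmetric]) (auto intro: arg_cong[where f = card])

lemma p_ed_od_eq_card_separated:
  "p_ed_od m n = card {S \<in> separated_partitions m n. \<exists>a\<in>S. odd a}"
  unfolding p_ed_od_def separated_partitions_def separated_def by (rule arg_cong[where f = card]) auto

lemma p_ed_od_Suc_Suc:
  "p_ed_od (Suc m) (Suc n)
   = D_e m n + card {T \<in> separated_partitions (Suc m) n. \<exists>b\<in>T. even b}"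
proof -
  let ?S = "separated_partitions (Suc m) (Suc n)"
  have "p_ed_od (Suc m) (Suc n)
        = card {S \<in> ?S. (\<exists>a\<in>S. odd a) \<and> (\<exists>a\<in>S. odd a \<and> a \<noteq> 1)}
          + card {S \<in> ?S. (\<exists>a\<in>S. odd a) \<and> \<not> (\<exists>a\<in>S. odd a \<and> a \<noteq> 1)}"
    unfolding p_ed_od_eq_card_separated by (rule card_filter_split[OF finite_separated_partitions])
  also have "{S \<in> ?S. (\<exists>a\<in>S. odd a) \<and> (\<exists>a\<in>S. odd a \<and> a \<noteq> 1)} = {S \<in> ?S. \<exists>a\<in>S. odd a \<and> a \<noteq> 1}"
    by blast
  also have "{S \<in> ?S. (\<exists>a\<in>S. odd a) \<and> \<not> (\<exists>a\<in>S. odd a \<and> a \<noteq> 1)}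
             = {S \<in> ?S. 1 \<in> S \<and> (\<forall>x\<in>S - {1}. even x)}"
    by (auto intro!: bexI[where x = 1])
  also note card_separated_large_odd_part
  also note card_separated_odd_part_one
  finally show ?thesis by (simp only: add.commute)
qed

lemma card_separated_even_part:
  "card {T \<in> separated_partitions (Suc m) n. \<exists>b\<in>T. even b}
   = card {T \<in> separated_partitions (Suc m) n. (\<exists>b\<in>T. even b) \<and> (\<exists>a\<in>T. odd a)} + D_e (Suc m) n"
proof -
  let ?S = "separated_partitions (Suc m) n"
  have "card {T \<in> ?S. \<exists>b\<in>T. even b}
        = card {T \<in> ?S. (\<exists>b\<in>T. even b) \<and> (\<exists>a\<in>T. odd a)}
          + card {T \<in> ?S. (\<exists>b\<in>T. even b) \<and> \<not> (\<exists>a\<in>T. odd a)}"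
    by (rule card_filter_split[OF finite_separated_partitions])
  also have "{T \<in> ?S. (\<exists>b\<in>T. even b) \<and> \<not> (\<exists>a\<in>T. odd a)}
             = {T \<in> distinct_partitions (Suc m) n. \<forall>x\<in>T. even x}"
    by (auto simp: separated_partitions_def separated_def dest: distinct_partitions_Suc_nonempty)
  finally show ?thesis unfolding D_e_def .
qed

lemma p_ed_od_Suc:
  "p_ed_od (Suc m) n
   = card {T \<in> separated_partitions (Suc m) n. (\<exists>b\<in>T. even b) \<and> (\<exists>a\<in>T. odd a)} + D_o (Suc m) n"
proof -
  let ?S = "separated_partitions (Suc m) n"
  have "p_ed_od (Suc m) n
        = card {T \<in> ?S. (\<exists>a\<in>T. odd a) \<and> (\<exists>b\<in>T. even b)}
          + card {T \<in> ?S. (\<exists>a\<in>T. odd a) \<and> \<not> (\<exists>b\<in>T. even b)}"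
    unfolding p_ed_od_eq_card_separated by (rule card_filter_split[OF finite_separated_partitions])
  also have "{T \<in> ?S. (\<exists>a\<in>T. odd a) \<and> (\<exists>b\<in>T. even b)}
             = {T \<in> ?S. (\<exists>b\<in>T. even b) \<and> (\<exists>a\<in>T. odd a)}"
    by blast
  also have "{T \<in> ?S. (\<exists>a\<in>T. odd a) \<and> \<not> (\<exists>b\<in>T. even b)}
             = {T \<in> distinct_partitions (Suc m) n. \<forall>x\<in>T. odd x}"
    by (auto simp: separated_partitions_def separated_def dest: distinct_partitions_Suc_nonempty)
  finally show ?thesis unfolding D_o_def .
qed

theorem mainTheorem4:
  fixes m n :: nat
  assumes "m \<ge> 1" and "n \<ge> 1"
  shows "int (p_ed_od m n) - int (p_ed_od m (n - 1))
         = int (D_e m (n - 1)) + int (D_e (m - 1) (n - 1)) - int (D_o m (n - 1))"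
proof -
  obtain k j where m: "m = Suc k" and n: "n = Suc j"
    using assms by (cases m; cases n) auto
  show ?thesis
    unfolding m n using p_ed_od_Suc_Suc[of k j] card_separated_even_part[of k j] p_ed_od_Suc[of k j]
    by simp
qed

end
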